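(* Let $A\in\mathbb{R}^{n\times n}$ and $B\in\mathbb{R}^{n\times m}$ be (unknown) matrices defining the discrete-time system $x^+=Ax+Bu$. Let $\mathrm{S}\in\mathbb{R}^{n_s\times n}$ be such that $\mathcal{S}:=\{x\in\mathbb{R}^n:\mathrm{S}x\le \mathbf{1}\}$ is a C-set, and let $\mathrm{U}\in\mathbb{R}^{n_u\times m}$ be such that $\mathcal{U}:=\{u\in\mathbb{R}^m:\mathrm{U}u\le\mathbf{1}\}$ (a polyhedral convex set containing the origin in its interior). Fix $\lambda\in[0,1)$. Let $u_d(0),\dots,u_d(T-1)\in\mathbb{R}^m$ be an input sequence applied to the system and $x_d(0),\dots,x_d(T)\in\mathbb{R}^n$ the corresponding state sequence, i.e. $x_d(k+1)=Ax_d(k)+Bu_d(k)$ for $k=0,\dots,T-1$, and set $U_{0,T}:=[u_d(0)\ \cdots\ u_d(T-1)]$, $X_{0,T}:=[x_d(0)\ \cdots\ x_d(T-1)]$, $X_{1,T}:=[x_d(1)\ \cdots\ x_d(T)]$. If there exist matrices $G_K\in\mathbb{R}^{T\times n}$ and $P\in\mathbb{R}^{n_s\times n_s}$ with $P\ge 0$ (entrywise) such that $P\mathbf{1}\le\lambda\mathbf{1}$, $\;P\mathrm{S}=\mathrm{S}X_{1,T}G_K$, $\;\mathrm{U}U_{0,T}G_K s\le\mathbf{1}$ for all vertices $s$ of $\mathcal{S}$, and $I_n=X_{0,T}G_K$, then the state-feedback gain $K=U_{0,T}G_K$ is such that $\mathcal{S}$ is $\lambda$-contractive for the closed-loop system $x^+=(A+BK)x$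 and $\mathcal{S}$ is admissible for $\mathcal{U}$ (i.e. $Kx\in\mathcal{U}$ for all $x\in\mathcal{S}$).
   Context: $\mathbf{1}$ denotes the vector of all ones of appropriate dimension; inequalities between vectors/matrices are entrywise. A C-set is a convex compact subset of $\mathbb{R}^n$ containing the origin as an interior point. For $\mu\ge0$, $\mu\mathcal{S}:=\{\mu x:x\in\mathcal{S}\}$. A C-set $\mathcal{S}$ is $\lambda$-contractive for $x^+=Fx$ (with $\lambda\in[0,1)$) if for each $x\in\mathcal{S}$, $\inf\{\lambda'\ge0: Fx\in\lambda'\mathcal{S}\}\le\lambda$. $\mathcal{S}$ is admissible for $\mathcal{U}$ (with gain $K$) if $Kx\in\mathcal{U}$ for every $x\in\mathcal{S}$. *)

theory Defs
  imports "HOL-Analysis.Analysis"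
begin

definition ones :: "real ^ 'a" where "ones = (\<chi> i. 1)"

definition vle :: "real ^ 'a \<Rightarrow> real ^ 'a \<Rightarrow> bool" where
  "vle x y \<longleftrightarrow> (\<forall>i. x $ i \<le> y $ i)"

definition polyset :: "real ^ 'n ^ 'k \<Rightarrow> (real ^ 'n) set" where
  "polyset M = {x. vle (M *v x) ones}"

definition C_set :: "(real ^ 'n) set \<Rightarrow> bool" where
  "C_set S \<longleftrightarrow> convex S \<and> compact S \<and> 0 \<in> interior S"

definition contractive :: "real \<Rightarrow> (real ^ 'n) set \<Rightarrow> real ^ 'n ^ 'n \<Rightarrow> bool" where
  "contractive lam S F \<longleftrightarrow>
     (\<forall>x\<in>S. Inf {l. l \<ge> 0 \<and> F *v x \<in> (\<lambda>y. l *\<^sub>R y) ` S} \<le> lam)"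

definition admissible :: "(real ^ 'n) set \<Rightarrow> (real ^ 'm) set \<Rightarrow> real ^ 'n ^ 'm \<Rightarrow> bool" where
  "admissible S U K \<longleftrightarrow> (\<forall>x\<in>S. K *v x \<in> U)"

text \<open>Product of the data matrix [c 0 ... c (T-1)] (columns c k) with the T-row matrix
  whose k-th row is g k.\<close>
definition data_mult :: "(nat \<Rightarrow> real ^ 'a) \<Rightarrow> nat \<Rightarrow> (nat \<Rightarrow> real ^ 'b) \<Rightarrow> real ^ 'b ^ 'a" where
  "data_mult c T g = (\<chi> i j. \<Sum>k<T. c k $ i * g k $ j)"

end

theory Submission
  imports Defs
begin

text \<open>Since \<open>X\<^sub>1 = A X\<^sub>0 + B U\<^sub>0\<close> on the data and \<open>X\<^sub>0 G\<^sub>K = I\<close>, the closed-loop matrix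
  \<open>A + B K\<close> with \<open>K = U\<^sub>0 G\<^sub>K\<close> equals \<open>X\<^sub>1 G\<^sub>K\<close>; so \<open>P S = S (A + B K)\<close>. For \<open>S x \<le> 1\<close>
  the nonnegativity of \<open>P\<close> gives \<open>S (A + B K) x = P S x \<le> P 1 \<le> \<lambda> 1\<close>, i.e. \<open>(A + B K) x\<close>
  lies in every dilate \<open>\<lambda>' {x. S x \<le> 1}\<close> with \<open>\<lambda>' > \<lambda>\<close>. The input constraint is convex in
  \<open>x\<close> and holds at the extreme points of the compact convex set \<open>{x. S x \<le> 1}\<close>, hence on all of
  it by Krein-Milman.\<close>

lemma data_mult_cong:
  "(\<And>k. k < T \<Longrightarrow> c k = d k) \<Longrightarrow> data_mult c T g = data_mult d T g"
  by (simp add: data_mult_def)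

lemma data_mult_add:
  "data_mult (\<lambda>k. c k + d k) T g = data_mult c T g + data_mult d T g"
  by (simp add: data_mult_def vec_eq_iff distrib_right sum.distrib)

lemma matrix_mult_data_mult:
  fixes M :: "real ^ 'a ^ 'b"
  shows "M ** data_mult c T g = data_mult (\<lambda>k. M *v c k) T g"
  by (simp add: data_mult_def matrix_matrix_mult_def matrix_vector_mult_def vec_eq_iff
      sum_distrib_left sum_distrib_right sum.swap[of _ "{..<T}"] mult.assoc)

lemma data_mult_shift:
  fixes A :: "real ^ 'n ^ 'n" and B :: "real ^ 'm ^ 'n"
  assumes "\<And>k. k < T \<Longrightarrow> xd (Suc k) = A *v xd k + B *v ud k"
  shows "data_mult (\<lambda>k. xd (Suc k)) T g = A ** data_mult xd T g + B ** data_mult ud T g"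
  using assms by (simp add: matrix_mult_data_mult data_mult_add[symmetric] cong: data_mult_cong)

lemma convex_polyset: "convex (polyset M)"
proof -
  have "polyset M = (\<Inter>i. {x. (M *v x) $ i \<le> 1})"
    by (auto simp: polyset_def vle_def ones_def)
  moreover have "convex {x. (M *v x) $ i \<le> 1}" for i
  proof -
    have "{x. (M *v x) $ i \<le> 1} = {x. inner (row i M) x \<le> 1}"
      by (simp add: matrix_vector_mult_def row_def inner_vec_def mult.commute)
    then show ?thesis by (simp add: convex_halfspace_le)
  qed
  ultimately show ?thesis by (simp add: convex_INT)
qed

lemma in_scaled_polysetI:
  assumes "0 < l" and "vle (M *v z) (l *\<^sub>R ones)"
  shows "z \<in> (\<lambda>y. l *\<^sub>R y) ` polyset M"
proof (rule image_eqI)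
  show "z = l *\<^sub>R (inverse l *\<^sub>R z)"
    using assms(1) by simp
  show "inverse l *\<^sub>R z \<in> polyset M"
    using assms by (auto simp: polyset_def vle_def ones_def matrix_vector_mult_scaleR field_simps)
qed

lemma nonneg_matrix_vector_mult_mono:
  fixes P :: "real ^ 'a ^ 'b"
  assumes "\<And>i j. 0 \<le> P $ i $ j" and "vle x y"
  shows "vle (P *v x) (P *v y)"
  using assms unfolding vle_def matrix_vector_mult_def
  by (auto intro!: sum_mono mult_left_mono)

lemma contractive_polysetI:
  assumes "0 \<le> lam" and "\<And>x. x \<in> polyset S \<Longrightarrow> vle (S *v (F *v x)) (lam *\<^sub>R ones)"
  shows "contractive lam (polyset S) F"
  unfolding contractive_def
proof
  fix x assume "x \<in> polyset S"
  let ?L = "{l. l \<ge> 0 \<and> F *v x \<in> (\<lambda>y. l *\<^sub>R y) ` polyset S}"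
  have "l \<in> ?L" if "lam < l" for l
  proof -
    have "vle (S *v (F *v x)) (l *\<^sub>R ones)"
      using assms(2)[OF \<open>x \<in> polyset S\<close>] that
      by (simp add: vle_def ones_def) (meson less_imp_le order_trans)
    then show ?thesis
      using assms(1) that by (auto intro: in_scaled_polysetI)
  qed
  moreover have "bdd_below ?L"
    by (auto intro: bdd_belowI[of _ 0])
  ultimately show "Inf ?L \<le> lam"
    by (auto intro: dense_ge cInf_lower)
qed

lemma contractive_polyset_nonneg_factor:
  fixes S :: "real ^ 'n ^ 'k" and P :: "real ^ 'k ^ 'k"
  assumes "0 \<le> lam" and "\<And>i j. 0 \<le> P $ i $ j"
    and "vle (P *v ones) (lam *\<^sub>R ones)" and "P ** S = S ** F"
  shows "contractive lam (polyset S) F"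
proof (rule contractive_polysetI[OF assms(1)])
  fix x assume "x \<in> polyset S"
  then have "vle (P *v (S *v x)) (P *v ones)"
    using assms(2) by (auto intro: nonneg_matrix_vector_mult_mono simp: polyset_def)
  then show "vle (S *v (F *v x)) (lam *\<^sub>R ones)"
    using assms(3,4) by (auto simp: vle_def matrix_vector_mul_assoc intro: order_trans)
qed

lemma admissible_extreme_points:
  assumes "compact S" "convex S" "convex U"
    and "\<And>s. s extreme_point_of S \<Longrightarrow> K *v s \<in> U"
  shows "admissible S U K"
proof -
  have "{s. s extreme_point_of S} \<subseteq> (*v) K -` U"
    using assms(4) by auto
  moreover have "convex ((*v) K -` U)"
    using assms(3) by (simp add: convex_linear_vimage)
  ultimately have "convex hull {s. s extreme_point_of S} \<subseteq> (*v) K -` U"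
    by (simp add: hull_minimal)
  then show ?thesis
    using Krein_Milman_Minkowski[OF assms(1,2)] by (auto simp: admissible_def)
qed

theorem theorem1:
  fixes A :: "real ^ 'n ^ 'n" and B :: "real ^ 'm ^ 'n"
    and Sm :: "real ^ 'n ^ 'ns" and Um :: "real ^ 'm ^ 'nu"
    and lam :: real and T :: nat
    and xd :: "nat \<Rightarrow> real ^ 'n" and ud :: "nat \<Rightarrow> real ^ 'm"
    and GK :: "nat \<Rightarrow> real ^ 'n" and P :: "real ^ 'ns ^ 'ns"
  assumes Cset: "C_set (polyset Sm)"
    and lam: "0 \<le> lam" "lam < 1"
    and dyn: "\<And>k. k < T \<Longrightarrow> xd (Suc k) = A *v xd k + B *v ud k"
    and Pnn: "\<And>i j. 0 \<le> P $ i $ j"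
    and P1: "vle (P *v ones) (lam *\<^sub>R ones)"
    and PS: "P ** Sm = Sm ** data_mult (\<lambda>k. xd (Suc k)) T GK"
    and Uv: "\<And>s. s extreme_point_of (polyset Sm) \<Longrightarrow>
               vle (Um *v (data_mult ud T GK *v s)) ones"
    and Id: "mat 1 = data_mult xd T GK"
  shows "contractive lam (polyset Sm) (A + B ** data_mult ud T GK)
         \<and> admissible (polyset Sm) (polyset Um) (data_mult ud T GK)"
proof
  have "data_mult (\<lambda>k. xd (Suc k)) T GK = A + B ** data_mult ud T GK"
    using data_mult_shift[where T = T and xd = xd and ud = ud and g = GK, OF dyn] Id[symmetric]
    by simp
  then show "contractive lam (polyset Sm) (A + B ** data_mult ud T GK)"
    using contractive_polyset_nonneg_factor[OF lam(1) Pnn P1] PS by simp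
  show "admissible (polyset Sm) (polyset Um) (data_mult ud T GK)"
    using Cset Uv
    by (intro admissible_extreme_points convex_polyset) (auto simp: C_set_def polyset_def)
qed

end
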